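(* For every integer $n\ge1$, $$\exp\!\left(\pi\sqrt{\tfrac{2n}{3}}\left(\sqrt{1-\tfrac{1}{24n}}-1\right)\right)=\sum_{t=0}^\infty e_1(t)\,n^{-t}+\sum_{t=0}^\infty o_1(t)\,n^{-(2t+1)/2},$$ where $e_1(0)=1$, $$e_1(t)=\frac{(-1)^t}{24^t}\frac{(1/2-t)_{t+1}}{t}\sum_{u=1}^t\frac{(-1)^u(-t)_u}{(t+u)!\,(2u-1)!}\left(\frac{\pi^2}{36}\right)^u\quad(t\ge1),$$ $$o_1(t)=-\frac{\pi}{12\sqrt6}\cdot\frac{(-1)^t(1/2-t)_{t+1}}{24^t}\sum_{u=0}^t\frac{(-1)^u(-t)_u}{(t+u+1)!\,(2u)!}\left(\frac{\pi^2}{36}\right)^u\quad(t\ge0).$$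
   Context: $(a)_m=a(a+1)\cdots(a+m-1)$ denotes the rising factorial (Pochhammer symbol), with $(a)_0=1$. *)

theory Defs
  imports Complex_Main
begin

text \<open>Coefficients e_1(t) and o_1(t); (a)_m is the rising factorial, i.e. pochhammer a m.\<close>

definition e1 :: "nat \<Rightarrow> real" where
  "e1 t = (if t = 0 then 1 else
     ((-1) ^ t / 24 ^ t) * (pochhammer (1/2 - real t) (t + 1) / real t) *
     (\<Sum>u = 1..t. ((-1) ^ u * pochhammer (- real t) u / (fact (t + u) * fact (2 * u - 1)))
                   * (pi\<^sup>2 / 36) ^ u))"

definition o1 :: "nat \<Rightarrow> real" where
  "o1 t = - (pi / (12 * sqrt 6)) *
     ((-1) ^ t * pochhammer (1/2 - real t) (t + 1) / 24 ^ t) *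
     (\<Sum>u = 0..t. ((-1) ^ u * pochhammer (- real t) u / (fact (t + u + 1) * fact (2 * u)))
                   * (pi\<^sup>2 / 36) ^ u)"

end

theory Submission
  imports Defs "HOL-Analysis.Infinite_Sum" "HOL-Analysis.Elementary_Metric_Spaces"
begin

text \<open>
  Put \<open>a = \<pi> \<surd>(2n/3)\<close> and \<open>x = 1/(24n)\<close>, so that the left-hand side is \<open>exp (a (\<surd>(1 - x) - 1))\<close>.
  As a function of \<open>x\<close> this is the solution of \<open>4 (1 - x) f'' - 2 f' - a\<^sup>2 f = 0\<close> with
  \<open>f 0 = 1\<close>, \<open>f' 0 = -a/2\<close>, so its Taylor coefficients in \<open>x\<close> obey a three-term recurrence,
  which is solved by explicit polynomials in \<open>a\<close>. The resulting double series in \<open>a\<^sup>k x\<^sup>m\<close>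
  converges absolutely for \<open>x < 1/(1 + a\<^sup>2)\<close>: its coefficients alternate in sign, so the series of
  absolute values is the same series at \<open>-\<bar>a\<bar>\<close>. Since \<open>a\<^sup>k x\<^sup>m\<close> is a multiple of
  \<open>n\<^bsup>k/2 - m\<^esup>\<close>, collecting the terms with \<open>k\<close> even and \<open>k\<close> odd yields the integral and the
  half-integral powers of \<open>n\<close>, with coefficients \<open>e1\<close> and \<open>o1\<close>.
\<close>

section \<open>The coefficients\<close>

text \<open>\<open>exp_sqrt_coeff m k\<close> is the coefficient of \<open>a\<^sup>k x\<^sup>m\<close> in \<open>exp (a (\<surd>(1 - x) - 1))\<close>,
  i.e. \<open>(-1)\<^sup>k / k!\<close> times the coefficient of \<open>x\<^sup>m\<close> in \<open>(1 - \<surd>(1 - x))\<^sup>k\<close>.\<close>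

definition exp_sqrt_coeff :: "nat \<Rightarrow> nat \<Rightarrow> real" where
  "exp_sqrt_coeff m k =
     (if k = 0 then (if m = 0 then 1 else 0)
      else if m < k then 0
      else (-1) ^ k * fact (2*m - k - 1) / (2 ^ (2*m - k) * fact (m - k) * fact m * fact (k - 1)))"

lemma exp_sqrt_coeff_eq_0: "m < k \<Longrightarrow> exp_sqrt_coeff m k = 0"
  by (simp add: exp_sqrt_coeff_def)

lemma exp_sqrt_coeff_closed:
  "exp_sqrt_coeff (j + r + 1) (j + 1) =
     (-1) ^ (j + 1) * fact (j + 2*r) / (2 ^ (j + 2*r + 1) * fact r * fact (j + r + 1) * fact j)"
  by (simp add: exp_sqrt_coeff_def algebra_simps)

lemma exp_sqrt_coeff_step_m:
  "4 * (real r + 1) * (real j + real r + 2) * exp_sqrt_coeff (j + r + 2) (j + 1) =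
     (real j + 2 * real r + 2) * (real j + 2 * real r + 1) * exp_sqrt_coeff (j + r + 1) (j + 1)"
proof -
  have "j + r + 2 = j + (r + 1) + 1" by simp
  then show ?thesis
    by (simp only: exp_sqrt_coeff_closed) (simp add: fact_Suc divide_simps, simp add: algebra_simps)
qed

lemma exp_sqrt_coeff_step_k:
  "(real j + real r + 3) * (real j + 2) * (real j + 1) * exp_sqrt_coeff (j + r + 3) (j + 3) =
     (real r + 1) * exp_sqrt_coeff (j + r + 2) (j + 1)"
proof -
  have "j + r + 3 = (j + 2) + r + 1" "j + 3 = (j + 2) + 1" "j + r + 2 = j + (r + 1) + 1" by simp_all
  then show ?thesis
    by (simp only: exp_sqrt_coeff_closed) (simp add: fact_Suc divide_simps, simp add: algebra_simps)
qed

lemma exp_sqrt_coeff_rec_diagonal: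
  "4 * (real i + 3) * (real i + 2) * exp_sqrt_coeff (i + 3) (i + 3) = exp_sqrt_coeff (i + 1) (i + 1)"
proof -
  have "4 * (real i + 2) * exp_sqrt_coeff (i + 2) (i + 1) = (real i + 2) * (real i + 1) * exp_sqrt_coeff (i + 1) (i + 1)"
    using exp_sqrt_coeff_step_m[where j = i and r = 0] by (simp add: algebra_simps)
  moreover have "(real i + 3) * (real i + 2) * (real i + 1) * exp_sqrt_coeff (i + 3) (i + 3) = exp_sqrt_coeff (i + 2) (i + 1)"
    using exp_sqrt_coeff_step_k[where j = i and r = 0] by (simp add: algebra_simps)
  moreover have "(real i + 2) * (real i + 1) \<noteq> 0" by simp
  ultimately show ?thesis by algebra
qed

lemma exp_sqrt_coeff_rec_two:
  assumes "1 \<le> m"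
  shows "4 * (real m + 2) * (real m + 1) * exp_sqrt_coeff (m + 2) 2 =
    (real m + 1) * (4 * real m + 2) * exp_sqrt_coeff (m + 1) 2"
proof -
  obtain s where "m = s + 1"
    using assms by (metis add.commute le_add_diff_inverse)
  then have idx: "1 + s + 2 = m + 2" "1 + s + 1 = m + 1" "(1::nat) + 1 = 2" and "real m = real s + 1"
    by simp_all
  have "4 * (real s + 1) * (1 + real s + 2) * exp_sqrt_coeff (m + 2) 2
      = (1 + 2 * real s + 2) * (1 + 2 * real s + 1) * exp_sqrt_coeff (m + 1) 2"
    using exp_sqrt_coeff_step_m[where j = 1 and r = s] unfolding idx of_nat_1 .
  moreover have "real s + 1 \<noteq> 0" by simp
  ultimately show ?thesis
    using \<open>real m = real s + 1\<close> by algebra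
qed

lemma exp_sqrt_coeff_rec_interior:
  "4 * (real i + real s + 4) * (real i + real s + 3) * exp_sqrt_coeff (i + s + 4) (i + 3) =
     (real i + real s + 3) * (4 * (real i + real s + 2) + 2) * exp_sqrt_coeff (i + s + 3) (i + 3)
     + exp_sqrt_coeff (i + s + 2) (i + 1)"
proof -
  have idx: "i + 2 + s + 2 = i + s + 4" "i + 2 + s + 1 = i + s + 3" "i + 2 + 1 = i + 3"
    by simp_all
  have "4 * (real s + 1) * (real i + real s + 4) * exp_sqrt_coeff (i + s + 4) (i + 3)
      = (real i + 2 * real s + 4) * (real i + 2 * real s + 3) * exp_sqrt_coeff (i + s + 3) (i + 3)"
    using exp_sqrt_coeff_step_m[where j = "i + 2" and r = s] unfolding idx of_nat_add of_nat_numeral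
    by algebra
  moreover have "(real s + 1) * exp_sqrt_coeff (i + s + 2) (i + 1)
      = (real i + real s + 3) * (real i + 2) * (real i + 1) * exp_sqrt_coeff (i + s + 3) (i + 3)"
    using exp_sqrt_coeff_step_k[where j = i and r = s] by (simp add: algebra_simps)
  moreover have "real s + 1 \<noteq> 0" by simp
  ultimately show ?thesis by algebra
qed

text \<open>The equation \<open>4 (1 - x) f'' - 2 f' - a\<^sup>2 f = 0\<close>, read off at the coefficient of \<open>a\<^sup>k x\<^sup>m\<close>.\<close>

lemma exp_sqrt_coeff_rec:
  "4 * (real m + 2) * (real m + 1) * exp_sqrt_coeff (m + 2) k =
     (real m + 1) * (4 * real m + 2) * exp_sqrt_coeff (m + 1) k
     + (if k \<ge> 2 then exp_sqrt_coeff m (k - 2) else 0)"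
proof -
  have "k = 0 \<or> m + 2 < k \<or> k = m + 2 \<or> k = 1 \<or> (k = 2 \<and> 1 \<le> m) \<or> (3 \<le> k \<and> k \<le> m + 1)"
    by linarith
  then consider "k = 0 \<or> m + 2 < k" | "k = m + 2" | "k = 1" | "k = 2" "1 \<le> m" | "3 \<le> k" "k \<le> m + 1"
    by blast
  then show ?thesis
  proof cases
    case 2
    then show ?thesis
    proof (cases m)
      case (Suc i)
      then show ?thesis
        using 2 exp_sqrt_coeff_rec_diagonal[of i] by (simp add: exp_sqrt_coeff_eq_0 numeral_eq_Suc add_ac)
    qed (simp add: exp_sqrt_coeff_def)
  next
    case 3
    then show ?thesis
      using exp_sqrt_coeff_step_m[where j = 0 and r = m] by (simp add: algebra_simps)
  next
    case 4
    moreover have "exp_sqrt_coeff m 0 = 0"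
      using \<open>1 \<le> m\<close> by (simp add: exp_sqrt_coeff_def)
    ultimately show ?thesis
      using exp_sqrt_coeff_rec_two[OF \<open>1 \<le> m\<close>] by simp
  next
    case 5
    define i s where "i = k - 3" and "s = m + 1 - k"
    have mk: "m + 2 = i + s + 4" "m + 1 = i + s + 3" "k - 2 = i + 1" "k = i + 3" "m = i + s + 2"
      using 5 by (simp_all add: i_def s_def)
    show ?thesis
      using exp_sqrt_coeff_rec_interior[of i s] \<open>3 \<le> k\<close>
      unfolding mk(1-3) unfolding mk(4,5) by (simp add: algebra_simps)
  qed (auto simp: exp_sqrt_coeff_def)
qed

lemma exp_sqrt_coeff_sign: "0 \<le> (-1) ^ k * exp_sqrt_coeff m k"
proof -
  have "(-1) ^ k * exp_sqrt_coeff m k = ((-1) ^ k * (-1) ^ k) * \<bar>exp_sqrt_coeff m k\<bar>"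
    by (auto simp: exp_sqrt_coeff_def abs_mult)
  also have "(-1 :: real) ^ k * (-1) ^ k = 1"
    by (simp flip: power_add)
  finally show ?thesis by simp
qed

definition exp_sqrt_poly :: "real \<Rightarrow> nat \<Rightarrow> real" where
  "exp_sqrt_poly a m = (\<Sum>k\<le>m. exp_sqrt_coeff m k * a ^ k)"

lemma exp_sqrt_poly_0: "exp_sqrt_poly a 0 = 1"
  by (simp add: exp_sqrt_poly_def exp_sqrt_coeff_def)

lemma exp_sqrt_poly_1: "exp_sqrt_poly a 1 = - a / 2"
  by (simp add: exp_sqrt_poly_def exp_sqrt_coeff_def)

lemma exp_sqrt_poly_rec:
  "4 * (real m + 2) * (real m + 1) * exp_sqrt_poly a (m + 2) =
     (real m + 1) * (4 * real m + 2) * exp_sqrt_poly a (m + 1) + a\<^sup>2 * exp_sqrt_poly a m"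
proof -
  have shifted: "(\<Sum>k\<le>m+2. (if k \<ge> 2 then exp_sqrt_coeff m (k-2) else 0) * a ^ k) = a\<^sup>2 * exp_sqrt_poly a m"
    unfolding exp_sqrt_poly_def numeral_2_eq_2 add_Suc_right add_0_right sum.atMost_Suc_shift
    by (simp add: power2_eq_square algebra_simps sum_distrib_left)
  have top: "exp_sqrt_poly a (m+1) = (\<Sum>k\<le>m+2. exp_sqrt_coeff (m+1) k * a ^ k)"
    unfolding exp_sqrt_poly_def
    by (rule sum.mono_neutral_left) (auto simp: exp_sqrt_coeff_eq_0)
  have "4 * (real m + 2) * (real m + 1) * exp_sqrt_poly a (m + 2)
      = (\<Sum>k\<le>m+2. (4 * (real m + 2) * (real m + 1) * exp_sqrt_coeff (m + 2) k) * a ^ k)"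
    by (simp only: exp_sqrt_poly_def sum_distrib_left mult.assoc)
  also have "\<dots> = (\<Sum>k\<le>m+2. (real m + 1) * (4 * real m + 2) * (exp_sqrt_coeff (m + 1) k * a ^ k)
      + (if k \<ge> 2 then exp_sqrt_coeff m (k-2) else 0) * a ^ k)"
    by (simp only: exp_sqrt_coeff_rec) (simp add: distrib_right mult.assoc)
  also have "\<dots> = (real m + 1) * (4 * real m + 2) * exp_sqrt_poly a (m + 1) + a\<^sup>2 * exp_sqrt_poly a m"
    by (simp only: sum.distrib top shifted sum_distrib_left)
  finally show ?thesis .
qed

lemma exp_sqrt_poly_abs_terms: "(\<Sum>k\<le>m. \<bar>exp_sqrt_coeff m k * a ^ k\<bar>) = exp_sqrt_poly (- \<bar>a\<bar>) m"
  unfolding exp_sqrt_poly_def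
proof (rule sum.cong)
  fix k
  have "\<bar>exp_sqrt_coeff m k\<bar> = (-1) ^ k * exp_sqrt_coeff m k"
    using abs_of_nonneg[OF exp_sqrt_coeff_sign[of k m]] by (simp add: abs_mult)
  moreover have "(- \<bar>a\<bar>) ^ k = (-1) ^ k * \<bar>a\<bar> ^ k"
    by (rule power_minus)
  ultimately show "\<bar>exp_sqrt_coeff m k * a ^ k\<bar> = exp_sqrt_coeff m k * (- \<bar>a\<bar>) ^ k"
    by (simp add: abs_mult power_abs)
qed simp

lemma two_step_growth_bound:
  fixes p :: "nat \<Rightarrow> real" and c :: real
  assumes "0 \<le> c" "\<bar>p 0\<bar> \<le> 1" "\<bar>p 1\<bar> \<le> 1 + c"
    and step: "\<And>m. \<bar>p (m + 2)\<bar> \<le> \<bar>p (m + 1)\<bar> + c * \<bar>p m\<bar>"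
  shows "\<bar>p m\<bar> \<le> (1 + c) ^ m"
proof (induction m rule: less_induct)
  case (less m)
  consider "m = 0" | "m = 1" | k where "m = k + 2"
    by (metis One_nat_def add_2_eq_Suc' not0_implies_Suc)
  then show ?case
  proof cases
    case (3 k)
    have "\<bar>p m\<bar> \<le> \<bar>p (k + 1)\<bar> + c * \<bar>p k\<bar>"
      using step[of k] \<open>m = k + 2\<close> by simp
    also have "\<dots> \<le> (1 + c) ^ (k + 1) + c * (1 + c) ^ k"
      using less[of "k + 1"] less[of k] \<open>m = k + 2\<close> \<open>0 \<le> c\<close>
      by (intro add_mono mult_left_mono) auto
    also have "\<dots> \<le> (1 + c) ^ m"
      using \<open>0 \<le> c\<close> \<open>m = k + 2\<close> by (simp add: algebra_simps power2_eq_square)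
    finally show ?thesis .
  qed (use assms in auto)
qed

lemma exp_sqrt_poly_bound: "\<bar>exp_sqrt_poly a m\<bar> \<le> (1 + a\<^sup>2) ^ m"
proof (rule two_step_growth_bound[where p = "exp_sqrt_poly a"])
  show "0 \<le> a\<^sup>2" "\<bar>exp_sqrt_poly a 0\<bar> \<le> 1"
    by (simp_all add: exp_sqrt_poly_0)
  have "\<bar>a\<bar> \<le> 1 + a\<^sup>2"
  proof (cases "\<bar>a\<bar> \<le> 1")
    case True
    then show ?thesis by (meson le_add_same_cancel1 order_trans zero_le_power2)
  next
    case False
    then have "\<bar>a\<bar> * 1 \<le> \<bar>a\<bar> * \<bar>a\<bar>" by (intro mult_left_mono) auto
    then show ?thesis by (simp add: power2_eq_square)
  qed
  then show "\<bar>exp_sqrt_poly a 1\<bar> \<le> 1 + a\<^sup>2"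
    unfolding exp_sqrt_poly_1 by simp
next
  fix m :: nat
  define c1 c2 :: real where "c1 = (real m + 1) * (4 * real m + 2)" and "c2 = 4 * (real m + 2) * (real m + 1)"
  have rec: "c2 * exp_sqrt_poly a (m+2) = c1 * exp_sqrt_poly a (m+1) + a\<^sup>2 * exp_sqrt_poly a m"
    unfolding c1_def c2_def by (rule exp_sqrt_poly_rec)
  have "0 \<le> c2" by (simp add: c2_def)
  then have "c2 * \<bar>exp_sqrt_poly a (m+2)\<bar> = \<bar>c2 * exp_sqrt_poly a (m+2)\<bar>"
    by (simp add: abs_mult)
  also have "\<dots> = \<bar>c1 * exp_sqrt_poly a (m+1) + a\<^sup>2 * exp_sqrt_poly a m\<bar>"
    by (simp only: rec)
  also have "\<dots> \<le> c1 * \<bar>exp_sqrt_poly a (m+1)\<bar> + a\<^sup>2 * \<bar>exp_sqrt_poly a m\<bar>"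
    by (rule order_trans[OF abs_triangle_ineq]) (simp add: c1_def abs_mult)
  also have "\<dots> \<le> c2 * (\<bar>exp_sqrt_poly a (m+1)\<bar> + a\<^sup>2 * \<bar>exp_sqrt_poly a m\<bar>)"
    unfolding c1_def c2_def distrib_left
    by (intro add_mono mult_right_mono) (auto simp: algebra_simps)
  finally show "\<bar>exp_sqrt_poly a (m+2)\<bar> \<le> \<bar>exp_sqrt_poly a (m+1)\<bar> + a\<^sup>2 * \<bar>exp_sqrt_poly a m\<bar>"
    by (simp add: c2_def)
qed

lemma exp_sqrt_poly_summable:
  assumes "\<bar>x\<bar> < 1 / (1 + a\<^sup>2)"
  shows "summable (\<lambda>m. exp_sqrt_poly a m * x ^ m)"
proof (rule summable_comparison_test)
  have "\<bar>(1 + a\<^sup>2) * x\<bar> = (1 + a\<^sup>2) * \<bar>x\<bar>"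
    by (simp only: abs_mult) simp
  also have "\<dots> < 1"
    using assms by (simp add: field_simps add_pos_nonneg)
  finally show "summable (\<lambda>m. \<bar>(1 + a\<^sup>2) * x\<bar> ^ m)"
    by (simp add: summable_geometric)
  show "\<exists>N. \<forall>m\<ge>N. norm (exp_sqrt_poly a m * x ^ m) \<le> \<bar>(1 + a\<^sup>2) * x\<bar> ^ m"
    by (auto simp: abs_mult power_abs power_mult_distrib intro!: mult_right_mono exp_sqrt_poly_bound)
qed

section \<open>The differential equation\<close>

lemma has_real_derivative_zero_imp_constant:
  fixes g :: "real \<Rightarrow> real"
  assumes "a < b" and deriv: "\<And>x. a \<le> x \<Longrightarrow> x \<le> b \<Longrightarrow> (g has_real_derivative 0) (at x)"
    and "a \<le> x" "x \<le> b"
  shows "g x = g a"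
proof (rule DERIV_isconst2[OF \<open>a < b\<close> continuous_at_imp_continuous_on])
  show "\<forall>y\<in>{a..b}. isCont g y"
    using deriv[THEN DERIV_isCont] by simp
qed (use assms in auto)

lemma ode_solution_eq_exp_sqrt:
  fixes f f' f'' :: "real \<Rightarrow> real" and a z :: real
  assumes "0 < z" "z < 1"
    and f: "\<And>x. 0 \<le> x \<Longrightarrow> x \<le> z \<Longrightarrow> (f has_real_derivative f' x) (at x)"
    and f': "\<And>x. 0 \<le> x \<Longrightarrow> x \<le> z \<Longrightarrow> (f' has_real_derivative f'' x) (at x)"
    and ode: "\<And>x. 0 \<le> x \<Longrightarrow> x \<le> z \<Longrightarrow> 4 * (1 - x) * f'' x - 2 * f' x - a\<^sup>2 * f x = 0"
    and "f 0 = 1" "f' 0 = - a / 2"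
  shows "f z = exp (a * (sqrt (1 - z) - 1))"
proof -
  have sqrt_pos: "0 < sqrt (1 - x)" if "x \<le> z" for x
    using that \<open>z < 1\<close> by simp
  have sqrt_sq: "sqrt (1 - x) * sqrt (1 - x) = 1 - x" "sqrt (1 - x) * (sqrt (1 - x) * y) = (1 - x) * y"
    if "x \<le> z" for x y
    using that \<open>z < 1\<close> by (simp_all flip: mult.assoc)
  have sqrt_deriv: "((\<lambda>x. sqrt (1 - x)) has_real_derivative - 1 / (2 * sqrt (1 - x))) (at x)"
    if "x \<le> z" for x
    using that \<open>z < 1\<close> by (auto intro!: derivative_eq_intros simp: divide_simps)
  \<comment> \<open>The equation makes \<open>g\<close> constant, and the initial values make it vanish; this leaves
    a first-order equation for \<open>f\<close> that makes \<open>h\<close> constant.\<close>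
  define g where "g x = (2 * sqrt (1 - x) * f' x + a * f x) * exp (a * sqrt (1 - x))" for x
  have g_deriv: "(g has_real_derivative 0) (at x)" if "0 \<le> x" "x \<le> z" for x
  proof -
    have "(g has_real_derivative
        exp (a * sqrt (1 - x)) / (2 * sqrt (1 - x)) * (4 * (1 - x) * f'' x - 2 * f' x - a\<^sup>2 * f x)) (at x)"
      unfolding g_def using sqrt_pos[OF that(2)] \<open>z < 1\<close> that
      by (auto intro!: derivative_eq_intros f f' sqrt_deriv simp: field_simps power2_eq_square sqrt_sq)
    then show ?thesis using ode[OF that] by simp
  qed
  have first_order: "2 * sqrt (1 - x) * f' x + a * f x = 0" if "0 \<le> x" "x \<le> z" for x
    using has_real_derivative_zero_imp_constant[OF \<open>0 < z\<close> g_deriv that] \<open>f 0 = 1\<close> \<open>f' 0 = - a / 2\<close>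
    by (simp add: g_def)
  define h where "h x = f x * exp (- a * (sqrt (1 - x) - 1))" for x
  have h_deriv: "(h has_real_derivative 0) (at x)" if "0 \<le> x" "x \<le> z" for x
  proof -
    have "(h has_real_derivative
        exp (- a * (sqrt (1 - x) - 1)) / (2 * sqrt (1 - x)) * (2 * sqrt (1 - x) * f' x + a * f x)) (at x)"
      unfolding h_def using sqrt_pos[OF that(2)]
      by (auto intro!: derivative_eq_intros f sqrt_deriv simp: that field_simps)
    then show ?thesis using first_order[OF that] by simp
  qed
  have "h z = h 0"
    using \<open>0 < z\<close> by (intro has_real_derivative_zero_imp_constant[OF \<open>0 < z\<close> h_deriv]) auto
  then have "f z * exp (- a * (sqrt (1 - z) - 1)) = 1"
    using \<open>f 0 = 1\<close> by (simp add: h_def)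
  then show ?thesis
    by (metis exp_minus_inverse mult.commute mult_minus_left mult_right_cancel exp_not_eq_zero)
qed

lemma powser_ode:
  fixes c :: "nat \<Rightarrow> real" and b x :: real
  assumes rec: "\<And>m. 4 * (real m + 2) * (real m + 1) * c (m + 2) = (real m + 1) * (4 * real m + 2) * c (m + 1) + b * c m"
    and S0: "(\<lambda>m. c m * x ^ m) sums f0"
    and S1: "(\<lambda>m. diffs c m * x ^ m) sums f1"
    and S2: "(\<lambda>m. diffs (diffs c) m * x ^ m) sums f2"
  shows "4 * (1 - x) * f2 - 2 * f1 - b * f0 = 0"
proof -
  define g where "g m = real m * (real m + 1) * c (m + 1) * x ^ m" for m
  have "(\<lambda>m. g (Suc m)) sums (x * f2)"
    using sums_mult[OF S2, of x] by (simp add: g_def diffs_def algebra_simps)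
  then have "g sums (x * f2 + g 0)"
    by (simp only: sums_Suc_iff)
  then have "g sums (x * f2)"
    by (simp add: g_def)
  then have "(\<lambda>m. 4 * g m) sums (4 * (x * f2))"
    by (rule sums_mult)
  moreover have "(\<lambda>m. 4 * g m) sums (4 * f2 - 2 * f1 - b * f0)"
  proof -
    have "(\<lambda>m. 4 * (diffs (diffs c) m * x ^ m) - 2 * (diffs c m * x ^ m) - b * (c m * x ^ m))
        sums (4 * f2 - 2 * f1 - b * f0)"
      by (intro sums_diff sums_mult S0 S1 S2)
    moreover have "4 * (diffs (diffs c) m * x ^ m) - 2 * (diffs c m * x ^ m) - b * (c m * x ^ m) = 4 * g m" for m
    proof -
      have "4 * diffs (diffs c) m - 2 * diffs c m - b * c m = 4 * (real m * (real m + 1) * c (m + 1))"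
        using rec[of m] by (simp add: diffs_def algebra_simps)
      then show ?thesis
        unfolding g_def by (metis (no_types, lifting) left_diff_distrib mult.assoc)
    qed
    ultimately show ?thesis by simp
  qed
  ultimately have "4 * (x * f2) = 4 * f2 - 2 * f1 - b * f0"
    by (rule sums_unique2)
  then show ?thesis by (simp add: algebra_simps)
qed

lemma exp_sqrt_poly_sums:
  assumes "0 < z" "z < 1 / (1 + a\<^sup>2)"
  shows "(\<lambda>m. exp_sqrt_poly a m * z ^ m) sums exp (a * (sqrt (1 - z) - 1))"
proof -
  define K where "K = 1 / (1 + a\<^sup>2)"
  define f where "f n x = (\<Sum>m. (diffs ^^ n) (exp_sqrt_poly a) m * x ^ m)" for n x
  have "K \<le> 1" by (simp add: K_def add_pos_nonneg)
  have summable: "summable (\<lambda>m. (diffs ^^ n) (exp_sqrt_poly a) m * x ^ m)" if "\<bar>x\<bar> < K" for n x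
    using that
  proof (induction n arbitrary: x)
    case 0
    then show ?case by (simp add: K_def exp_sqrt_poly_summable)
  next
    case (Suc n)
    then show ?case by (auto intro: termdiff_converges[of x K])
  qed
  have deriv: "(f n has_real_derivative f (Suc n) x) (at x)" if "\<bar>x\<bar> < K" for n x
    unfolding f_def[abs_def] funpow.simps o_apply using that summable
    by (intro termdiffs_strong'[of K]) auto
  have "f 0 z = exp (a * (sqrt (1 - z) - 1))"
  proof (rule ode_solution_eq_exp_sqrt[where f' = "f 1" and f'' = "f 2"])
    show "0 < z" "z < 1" using assms \<open>K \<le> 1\<close> by (simp_all add: K_def)
    fix x assume "0 \<le> x" "x \<le> z"
    then have "\<bar>x\<bar> < K" using assms by (simp add: K_def)
    show "(f 0 has_real_derivative f 1 x) (at x)" "(f 1 has_real_derivative f 2 x) (at x)"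
      using deriv[OF \<open>\<bar>x\<bar> < K\<close>] by (simp_all add: numeral_2_eq_2)
    have "summable (\<lambda>m. (diffs ^^ n) (exp_sqrt_poly a) m * x ^ m)" for n
      using summable[OF \<open>\<bar>x\<bar> < K\<close>] .
    from this[of 0] this[of 1] this[of 2]
    show "4 * (1 - x) * f 2 x - 2 * f 1 x - a\<^sup>2 * f 0 x = 0"
      unfolding f_def by (intro powser_ode[OF exp_sqrt_poly_rec]) (simp_all add: numeral_2_eq_2 summable_sums)
  next
    show "f 0 0 = 1"
      by (simp add: f_def powser_zero exp_sqrt_poly_0)
    have "f 1 0 = exp_sqrt_poly a 1"
      by (simp add: f_def powser_zero diffs_def)
    then show "f 1 0 = - a / 2"
      unfolding exp_sqrt_poly_1 .
  qed
  moreover have "(\<lambda>m. exp_sqrt_poly a m * z ^ m) sums f 0 z"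
    using summable[of z 0] assms by (simp add: f_def K_def summable_sums)
  ultimately show ?thesis by simp
qed

section \<open>Absolute convergence and rearrangement\<close>

lemma exp_sqrt_double_series:
  assumes "0 < z" "z < 1 / (1 + a\<^sup>2)"
  shows "((\<lambda>(m, k). exp_sqrt_coeff m k * a ^ k * z ^ m) has_sum exp (a * (sqrt (1 - z) - 1)))
           (SIGMA m:UNIV. {..m})"
proof -
  define F where "F = (\<lambda>(m, k). exp_sqrt_coeff m k * a ^ k * z ^ m)"
  have row_norms: "(\<Sum>k\<le>m. norm (F (m, k))) = exp_sqrt_poly (- \<bar>a\<bar>) m * z ^ m" for m
    using \<open>0 < z\<close> by (simp add: F_def abs_mult sum_distrib_right flip: exp_sqrt_poly_abs_terms)
  have nonneg: "0 \<le> exp_sqrt_poly (- \<bar>a\<bar>) m * z ^ m" for m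
    unfolding row_norms[symmetric] by (rule sum_nonneg) simp
  have "summable (\<lambda>m. exp_sqrt_poly (- \<bar>a\<bar>) m * z ^ m)"
    using assms by (intro exp_sqrt_poly_summable) simp
  then have "(\<lambda>m. exp_sqrt_poly (- \<bar>a\<bar>) m * z ^ m) summable_on UNIV"
    using nonneg by (simp add: summable_on_UNIV_nonneg_real_iff)
  then have outer: "(\<lambda>m. infsum (\<lambda>k. norm (F (m, k))) {..m}) abs_summable_on UNIV"
    by (simp only: infsum_finite[OF finite_atMost] row_norms) (simp only: real_norm_def abs_of_nonneg[OF nonneg])
  have rows: "(\<lambda>k. F (m, k)) abs_summable_on {..m}" for m
    by (rule summable_on_finite) simp
  have "F abs_summable_on (SIGMA m:UNIV. {..m})"
    by (rule iffD2[OF abs_summable_on_Sigma_iff], intro conjI ballI rows outer)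
  then have "F summable_on (SIGMA m:UNIV. {..m})"
    by (rule iffD2[OF summable_on_iff_abs_summable_on_real])
  then obtain X where X: "(F has_sum X) (SIGMA m:UNIV. {..m})"
    by (auto simp: summable_on_def)
  have "((\<lambda>m. \<Sum>k\<le>m. F (m, k)) has_sum X) UNIV"
    by (rule has_sum_SigmaD[OF X]) simp
  then have "(\<lambda>m. exp_sqrt_poly a m * z ^ m) sums X"
    by (auto dest!: has_sum_imp_sums simp: F_def exp_sqrt_poly_def sum_distrib_right)
  then have "X = exp (a * (sqrt (1 - z) - 1))"
    using exp_sqrt_poly_sums[OF assms] by (rule sums_unique2)
  then show ?thesis using X by (simp add: F_def)
qed

lemma has_sum_triangle_parity_split:
  fixes F :: "nat \<times> nat \<Rightarrow> 'a :: banach"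
  assumes "(F has_sum X) (SIGMA m:UNIV. {..m})"
  shows "\<exists>A B. (\<lambda>t. \<Sum>u\<le>t. F (t + u, 2 * u)) sums A
            \<and> (\<lambda>t. \<Sum>u\<le>t. F (t + u + 1, 2 * u + 1)) sums B \<and> X = A + B"
proof -
  define T where "T = (SIGMA t:UNIV. {..t :: nat})"
  define even_pos odd_pos where "even_pos p = (fst p + snd p, 2 * snd p)"
    and "odd_pos p = (fst p + snd p + 1, 2 * snd p + 1)" for p :: "nat \<times> nat"
  have inj: "inj_on even_pos T" "inj_on odd_pos T"
    by (auto simp: even_pos_def odd_pos_def inj_on_def)
  have disjoint: "even_pos ` T \<inter> odd_pos ` T = {}"
    by (auto simp: even_pos_def odd_pos_def) presburger
  have split: "(SIGMA m:UNIV. {..m}) = even_pos ` T \<union> odd_pos ` T"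
  proof (intro equalityI subsetI)
    fix p :: "nat \<times> nat" assume "p \<in> (SIGMA m:UNIV. {..m})"
    then obtain m k where p: "p = (m, k)" "k \<le> m" by auto
    show "p \<in> even_pos ` T \<union> odd_pos ` T"
    proof (cases "even k")
      case True
      then obtain u where "k = 2 * u" by blast
      then have "p = even_pos (m - u, u)" "(m - u, u) \<in> T" using p by (auto simp: even_pos_def T_def)
      then show ?thesis by blast
    next
      case False
      then obtain u where "k = 2 * u + 1" by (metis oddE)
      then have "p = odd_pos (m - u - 1, u)" "(m - u - 1, u) \<in> T" using p by (auto simp: odd_pos_def T_def)
      then show ?thesis by blast
    qed
  qed (auto simp: T_def even_pos_def odd_pos_def)
  have "F summable_on (SIGMA m:UNIV. {..m})"
    using assms by (auto simp: summable_on_def)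
  then have "F summable_on even_pos ` T" "F summable_on odd_pos ` T"
    by (simp_all add: split summable_on_subset_banach)
  then obtain A B where A: "(F has_sum A) (even_pos ` T)" and B: "(F has_sum B) (odd_pos ` T)"
    by (auto simp: summable_on_def)
  have "X = A + B"
    using assms[unfolded split] has_sum_Un_disjoint[OF A B disjoint] by (rule has_sum_unique)
  have E: "((F \<circ> even_pos) has_sum A) (SIGMA t:UNIV. {..t})"
    and O: "((F \<circ> odd_pos) has_sum B) (SIGMA t:UNIV. {..t})"
    using iffD1[OF has_sum_reindex[OF inj(1)] A] iffD1[OF has_sum_reindex[OF inj(2)] B]
    by (simp_all only: T_def)
  have "((\<lambda>t. \<Sum>u\<le>t. (F \<circ> even_pos) (t, u)) has_sum A) UNIV"
    by (rule has_sum_SigmaD[OF E]) simp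
  moreover have "((\<lambda>t. \<Sum>u\<le>t. (F \<circ> odd_pos) (t, u)) has_sum B) UNIV"
    by (rule has_sum_SigmaD[OF O]) simp
  ultimately show ?thesis
    using \<open>X = A + B\<close>
    by (auto dest!: has_sum_imp_sums simp: even_pos_def odd_pos_def)
qed

section \<open>The coefficients \<open>e1\<close> and \<open>o1\<close>\<close>

lemma pochhammer_half_minus:
  "pochhammer (1/2 - real t) (t + 1) = (-1) ^ t * fact (2 * t) / (2 * 4 ^ t * fact t)"
proof (induction t)
  case (Suc t)
  have "pochhammer (1/2 - real (Suc t)) (Suc t + 1) = (1/2 - real (Suc t)) * pochhammer (1/2 - real t) (t + 1)"
    by (simp add: pochhammer_rec algebra_simps)
  also have "\<dots> = (-1) ^ Suc t * fact (2 * Suc t) / (2 * 4 ^ Suc t * fact (Suc t))"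
    unfolding Suc.IH by (simp add: fact_Suc divide_simps) (simp add: algebra_simps)
  finally show ?case .
qed simp

lemma pochhammer_minus_nat:
  "u \<le> t \<Longrightarrow> (-1) ^ u * pochhammer (- real t) u = fact t / fact (t - u)"
proof (induction u)
  case (Suc u)
  then have "u < t" by simp
  have "(-1) ^ Suc u * pochhammer (- real t) (Suc u) = ((-1) ^ u * pochhammer (- real t) u) * (real t - real u)"
    by (simp add: pochhammer_Suc algebra_simps)
  also have "\<dots> = fact t / fact (t - u) * real (t - u)"
    using Suc \<open>u < t\<close> by (simp add: of_nat_diff)
  also have "fact (t - u) = real (t - u) * fact (t - Suc u)"
    using \<open>u < t\<close> by (metis Suc_diff_Suc fact_Suc of_nat_mult)
  also have "fact t / (real (t - u) * fact (t - Suc u)) * real (t - u) = fact t / fact (t - Suc u)"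
    using \<open>u < t\<close> by simp
  finally show ?case .
qed simp

lemma exp_sqrt_coeff_even:
  assumes "1 \<le> u" "u \<le> t"
  shows "exp_sqrt_coeff (t + u) (2 * u) / 24 ^ t =
    ((-1) ^ t / 24 ^ t) * (pochhammer (1/2 - real t) (t + 1) / real t) *
    ((-1) ^ u * pochhammer (- real t) u / (fact (t + u) * fact (2 * u - 1)))"
proof -
  have idx: "2 * (t + u) - 2 * u - 1 = 2 * t - 1" "2 * (t + u) - 2 * u = 2 * t" "t + u - 2 * u = t - u"
    using assms by simp_all
  have coeff: "exp_sqrt_coeff (t + u) (2 * u) = fact (2 * t - 1) / (4 ^ t * fact (t - u) * fact (t + u) * fact (2 * u - 1))"
    using assms unfolding exp_sqrt_coeff_def idx by (simp add: power_mult)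
  have "2 * t = Suc (2 * t - 1)"
    using assms by simp
  then have "fact (2 * t) = real (2 * t) * fact (2 * t - 1)"
    by (metis fact_Suc)
  moreover have "(-1 :: real) ^ t * (-1) ^ t = 1"
    by (simp flip: power_add)
  moreover have "real t \<noteq> 0" using assms by simp
  ultimately show ?thesis
    unfolding coeff pochhammer_half_minus pochhammer_minus_nat[OF assms(2)]
    by (simp add: field_simps)
qed

lemma exp_sqrt_coeff_odd:
  assumes "u \<le> t"
  shows "exp_sqrt_coeff (t + u + 1) (2 * u + 1) / 24 ^ t =
    - ((-1) ^ t * pochhammer (1/2 - real t) (t + 1) / 24 ^ t) *
    ((-1) ^ u * pochhammer (- real t) u / (fact (t + u + 1) * fact (2 * u)))"
proof -
  have idx: "2 * (t + u + 1) - (2 * u + 1) - 1 = 2 * t" "2 * (t + u + 1) - (2 * u + 1) = 2 * t + 1"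
    "t + u + 1 - (2 * u + 1) = t - u"
    using assms by simp_all
  have coeff: "exp_sqrt_coeff (t + u + 1) (2 * u + 1)
      = - fact (2 * t) / (2 * 4 ^ t * fact (t - u) * fact (t + u + 1) * fact (2 * u))"
    using assms unfolding exp_sqrt_coeff_def idx by (simp add: power_mult)
  have "(-1 :: real) ^ t * (-1) ^ t = 1"
    by (simp flip: power_add)
  then show ?thesis
    unfolding coeff pochhammer_half_minus pochhammer_minus_nat[OF assms]
    by (simp add: field_simps)
qed

lemma even_power_term:
  fixes x :: real
  assumes "0 < x"
  shows "(pi * sqrt (2 * x / 3)) ^ (2 * u) * (1 / (24 * x)) ^ (t + u) = (pi\<^sup>2 / 36) ^ u / 24 ^ t * x powr (- real t)"
proof -
  have "(pi * sqrt (2 * x / 3))\<^sup>2 = 24 * (pi\<^sup>2 / 36) * x"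
    using assms by (simp add: power_mult_distrib)
  then have "(pi * sqrt (2 * x / 3)) ^ (2 * u) = 24 ^ u * (pi\<^sup>2 / 36) ^ u * x ^ u"
    by (simp only: power_mult power_mult_distrib)
  moreover have "(1 / (24 * x)) ^ (t + u) = 1 / (24 ^ t * 24 ^ u * x ^ t * x ^ u)"
    by (simp add: power_add power_mult_distrib power_one_over)
  moreover have "x powr (- real t) = 1 / x ^ t"
    using assms by (simp add: powr_minus_divide powr_realpow)
  ultimately show ?thesis
    using assms by simp
qed

lemma odd_power_term:
  fixes x :: real
  assumes "0 < x"
  shows "(pi * sqrt (2 * x / 3)) ^ (2 * u + 1) * (1 / (24 * x)) ^ (t + u + 1)
    = pi / (12 * sqrt 6) * (pi\<^sup>2 / 36) ^ u / 24 ^ t * x powr (- (2 * real t + 1) / 2)"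
proof -
  have "sqrt (2 * x / 3) * sqrt 6 = sqrt (4 * x)"
    by (simp flip: real_sqrt_mult)
  also have "\<dots> = 2 * sqrt x"
    by (simp add: real_sqrt_mult)
  finally have "sqrt (2 * x / 3) = 2 * sqrt x / sqrt 6"
    by (simp add: field_simps)
  then have "pi * sqrt (2 * x / 3) / (24 * x) = pi * (2 * sqrt x / sqrt 6) / (24 * (sqrt x * sqrt x))"
    using assms by simp
  also have "\<dots> = pi / (12 * sqrt 6) / sqrt x"
    using assms by (simp add: field_simps)
  finally have factor: "pi * sqrt (2 * x / 3) / (24 * x) = pi / (12 * sqrt 6) / sqrt x" .
  moreover have "x powr (- (2 * real t + 1) / 2) = x powr (- real t) / sqrt x"
  proof -
    have "- (2 * real t + 1) / 2 = - real t - 1 / 2" by simp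
    then show ?thesis
      using assms by (simp only: powr_diff powr_half_sqrt less_imp_le)
  qed
  then have "(pi\<^sup>2 / 36) ^ u / 24 ^ t * x powr (- real t) * (pi * sqrt (2 * x / 3) / (24 * x))
      = pi / (12 * sqrt 6) * (pi\<^sup>2 / 36) ^ u / 24 ^ t * x powr (- (2 * real t + 1) / 2)"
    unfolding factor by (simp add: mult_ac)
  moreover have "(pi * sqrt (2 * x / 3)) ^ (2 * u + 1) * (1 / (24 * x)) ^ (t + u + 1)
      = (pi * sqrt (2 * x / 3)) ^ (2 * u) * (1 / (24 * x)) ^ (t + u) * (pi * sqrt (2 * x / 3) / (24 * x))"
    by (simp add: power_add)
  ultimately show ?thesis
    by (simp only: even_power_term[OF assms])
qed

lemma exp_sqrt_even_part:
  fixes x :: real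
  assumes "0 < x"
  shows "(\<Sum>u\<le>t. exp_sqrt_coeff (t + u) (2 * u) * (pi * sqrt (2 * x / 3)) ^ (2 * u) * (1 / (24 * x)) ^ (t + u))
    = e1 t * x powr (- real t)"
proof (cases "t = 0")
  case False
  define K where "K = ((-1) ^ t / 24 ^ t) * (pochhammer (1/2 - real t) (t + 1) / real t)"
  have "(\<Sum>u\<le>t. exp_sqrt_coeff (t + u) (2 * u) * (pi * sqrt (2 * x / 3)) ^ (2 * u) * (1 / (24 * x)) ^ (t + u))
      = (\<Sum>u=1..t. exp_sqrt_coeff (t + u) (2 * u) * (pi * sqrt (2 * x / 3)) ^ (2 * u) * (1 / (24 * x)) ^ (t + u))"
    using False by (intro sum.mono_neutral_right) (auto simp: exp_sqrt_coeff_def)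
  also have "\<dots> = (\<Sum>u=1..t. K * (((-1) ^ u * pochhammer (- real t) u / (fact (t + u) * fact (2 * u - 1)))
      * (pi\<^sup>2 / 36) ^ u) * x powr (- real t))"
  proof (rule sum.cong[OF refl])
    fix u assume "u \<in> {1..t}"
    then have "exp_sqrt_coeff (t + u) (2 * u) / 24 ^ t =
        K * ((-1) ^ u * pochhammer (- real t) u / (fact (t + u) * fact (2 * u - 1)))"
      unfolding K_def by (intro exp_sqrt_coeff_even) auto
    then show "exp_sqrt_coeff (t + u) (2 * u) * (pi * sqrt (2 * x / 3)) ^ (2 * u) * (1 / (24 * x)) ^ (t + u)
        = K * (((-1) ^ u * pochhammer (- real t) u / (fact (t + u) * fact (2 * u - 1))) * (pi\<^sup>2 / 36) ^ u)
          * x powr (- real t)"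
      unfolding mult.assoc[of "exp_sqrt_coeff _ _"] even_power_term[OF assms]
      by (simp add: field_simps)
  qed
  also have "\<dots> = e1 t * x powr (- real t)"
    using False by (simp add: e1_def K_def sum_distrib_left sum_distrib_right)
  finally show ?thesis .
qed (use assms in \<open>simp add: e1_def exp_sqrt_coeff_def\<close>)

lemma exp_sqrt_odd_part:
  fixes x :: real
  assumes "0 < x"
  shows "(\<Sum>u\<le>t. exp_sqrt_coeff (t + u + 1) (2 * u + 1) * (pi * sqrt (2 * x / 3)) ^ (2 * u + 1)
      * (1 / (24 * x)) ^ (t + u + 1)) = o1 t * x powr (- (2 * real t + 1) / 2)"
proof -
  define K where "K = - ((-1) ^ t * pochhammer (1/2 - real t) (t + 1) / 24 ^ t)"
  have "(\<Sum>u\<le>t. exp_sqrt_coeff (t + u + 1) (2 * u + 1) * (pi * sqrt (2 * x / 3)) ^ (2 * u + 1)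
      * (1 / (24 * x)) ^ (t + u + 1))
      = (\<Sum>u\<le>t. pi / (12 * sqrt 6) * K * (((-1) ^ u * pochhammer (- real t) u / (fact (t + u + 1) * fact (2 * u)))
      * (pi\<^sup>2 / 36) ^ u) * x powr (- (2 * real t + 1) / 2))"
  proof (rule sum.cong[OF refl])
    fix u assume "u \<in> {..t}"
    then have "exp_sqrt_coeff (t + u + 1) (2 * u + 1) / 24 ^ t =
        K * ((-1) ^ u * pochhammer (- real t) u / (fact (t + u + 1) * fact (2 * u)))"
      unfolding K_def by (intro exp_sqrt_coeff_odd) auto
    then show "exp_sqrt_coeff (t + u + 1) (2 * u + 1) * (pi * sqrt (2 * x / 3)) ^ (2 * u + 1)
        * (1 / (24 * x)) ^ (t + u + 1) = pi / (12 * sqrt 6) * K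
        * (((-1) ^ u * pochhammer (- real t) u / (fact (t + u + 1) * fact (2 * u))) * (pi\<^sup>2 / 36) ^ u)
        * x powr (- (2 * real t + 1) / 2)"
      unfolding mult.assoc[of "exp_sqrt_coeff _ _"] odd_power_term[OF assms]
      by (simp add: field_simps)
  qed
  also have "\<dots> = o1 t * x powr (- (2 * real t + 1) / 2)"
    by (simp add: o1_def K_def sum_distrib_left sum_distrib_right atMost_atLeast0 mult.assoc)
  finally show ?thesis .
qed

lemma exp_sqrt_radius_bound:
  fixes x :: real
  assumes "1 \<le> x"
  shows "1 / (24 * x) < 1 / (1 + (pi * sqrt (2 * x / 3))\<^sup>2)"
proof -
  have "pi\<^sup>2 < 4\<^sup>2"
    using pi_less_4 pi_gt_zero by (intro power_strict_mono) auto
  then have "pi\<^sup>2 * (2 * x / 3) < 16 * (2 * x / 3)"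
    using assms by (intro mult_strict_right_mono) auto
  moreover have "(pi * sqrt (2 * x / 3))\<^sup>2 = pi\<^sup>2 * (2 * x / 3)"
    using assms by (simp add: power_mult_distrib)
  ultimately have "1 + (pi * sqrt (2 * x / 3))\<^sup>2 < 24 * x"
    using assms by linarith
  then show ?thesis
    using assms by (auto intro!: divide_strict_left_mono mult_pos_pos add_pos_nonneg)
qed

theorem mainTheorem4:
  fixes n :: nat
  assumes "n \<ge> 1"
  shows "\<exists>A B. (\<lambda>t. e1 t * real n powr (- real t)) sums A
             \<and> (\<lambda>t. o1 t * real n powr (- (2 * real t + 1) / 2)) sums B
             \<and> exp (pi * sqrt (2 * real n / 3) * (sqrt (1 - 1 / (24 * real n)) - 1)) = A + B"
proof -
  define x where "x = real n"
  define a z where "a = pi * sqrt (2 * x / 3)" and "z = 1 / (24 * x)"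
  have "1 \<le> x" using assms by (simp add: x_def)
  have "0 < z" "z < 1 / (1 + a\<^sup>2)"
    using \<open>1 \<le> x\<close> exp_sqrt_radius_bound[OF \<open>1 \<le> x\<close>] by (simp_all add: a_def z_def)
  from has_sum_triangle_parity_split[OF exp_sqrt_double_series[OF this]]
  obtain A B where even: "(\<lambda>t. \<Sum>u\<le>t. exp_sqrt_coeff (t + u) (2 * u) * a ^ (2 * u) * z ^ (t + u)) sums A"
    and odd: "(\<lambda>t. \<Sum>u\<le>t. exp_sqrt_coeff (t + u + 1) (2 * u + 1) * a ^ (2 * u + 1) * z ^ (t + u + 1)) sums B"
    and "exp (a * (sqrt (1 - z) - 1)) = A + B"
    by auto
  have "0 < x" using \<open>1 \<le> x\<close> by simp
  have "(\<lambda>t. e1 t * x powr (- real t)) sums A"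
    using even unfolding a_def z_def exp_sqrt_even_part[OF \<open>0 < x\<close>] .
  moreover have "(\<lambda>t. o1 t * x powr (- (2 * real t + 1) / 2)) sums B"
    using odd unfolding a_def z_def exp_sqrt_odd_part[OF \<open>0 < x\<close>] .
  ultimately show ?thesis
    using \<open>exp (a * (sqrt (1 - z) - 1)) = A + B\<close> unfolding a_def z_def x_def by blast
qed

end
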